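(* Assume $\eta$ is supported on $\{\mathbf{x}\in E:|\mathbf{x}|_\infty\le R\}$ for some $R>0$. Let $\rho$ be a Borel probability distribution on $\mathsf{X}$ such that $f_i$ is $\rho$-integrable for every $i\in[n+1]$, and let $X$ be the process constructed from $\rho$ as in the context. Then for every $i\in[n+1]$ and every $t\ge0$, $\mathbb{E}(f_i(X_t))$ is well-defined and finite.
   Context: Fix $\theta_a,\theta_d>0$, positive integers $n,N$, $E=\mathbb{R}^N$ with the $\infty$-norm $|\cdot|_\infty$, and a Borel probability measure $\eta$ on $E$ with finite mean. $[k]=\{0,\dots,k-1\}$; $|\psi|=\sum_{i\in[n]}\psi(i)$. State space: $\mathsf{X}=\{(\psi,\mathbf{v})\in\{0,1\}^{[n]}\times E^{[n+1]}:\sum_{i\in[n]}\psi(i)(\mathbf{v}(i)-\mathbf{v}(n))=0\}$ (subspace of the product topology, discrete on $\{0,1\}$, Euclidean on $E$). $f_i(\psi,\mathbf{v})=\mathbf{v}(i)$ for $i\in[n+1]$. For $i\in[n]$: $r_i(\psi)=\frac{\theta_d\psi(i)+\theta_a(1-\psi(i))}{\theta_d|\psi|+\theta_a(n-|\psi|)}$; $s_i(\psi)$ agrees with $\psi$ except $s_i(\psi)(i)=1-\psi(i)$. For $\mathsf{x}=(\psi,\mathbf{v})\in\mathsf{X}$, $\lambda_i^{\mathsf{x}}$ is the law of $(s_i(\psi),\mathbf{w})$ with $\mathbf{w}(j)=\mathbf{v}(j)$ for $j\in[n]\setminus\{i\}$ and $(\mathbf{w}(i),\mathbf{w}(n))$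 equal to $(\mathbf{v}(i),\mathbf{v}(n))$ if $|\psi|=\psi(i)=1$; $(\mathbf{v}(i),\mathbf{v}(n)-\frac{\mathbf{v}(i)-\mathbf{v}(n)}{|\psi|-1})$ if $|\psi|>\psi(i)=1$; $(\mathbf{x}+\mathbf{v}(n),\frac{\mathbf{x}}{|\psi|+1}+\mathbf{v}(n))$ with $\mathbf{x}\sim\eta$ if $\psi(i)=0$. $\mu(\mathsf{x},B)=\sum_{i\in[n]}r_i(\psi)\lambda_i^{\mathsf{x}}(B)$; $c(\psi,\mathbf{v})=\theta_d|\psi|+\theta_a(n-|\psi|)$. Construction of $X$ from $\rho$: $Y$ is a discrete-time Markov chain on $\mathsf{X}$ with transition kernel $\mu$ and $Y_0\sim\rho$; $(\gamma_k)_{k\ge1}$ i.i.d. standard exponential with $\{Y,\gamma_1,\gamma_2,\dots\}$ independent; $\tau_0=0$, $\tau_k=\sum_{i=1}^k\gamma_i/c(Y_{i-1})$; $X_t=Y_k$ for $t\in[\tau_k,\tau_{k+1})$. *)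

theory Defs
  imports "HOL-Probability.Probability"
begin

type_synonym 'N state = "(nat \<Rightarrow> bool) \<times> (nat \<Rightarrow> real ^ 'N)"

text \<open>|psi| = number of indices i < n with psi(i) = 1 (psi(i) = 1 is encoded as psi i = True).\<close>
definition psiCard :: "nat \<Rightarrow> (nat \<Rightarrow> bool) \<Rightarrow> nat" where
  "psiCard n \<psi> = card {i. i < n \<and> \<psi> i}"

definition Xset :: "nat \<Rightarrow> ('N::finite) state set" where
  "Xset n = {(\<psi>, v). \<psi> \<in> {..<n} \<rightarrow>\<^sub>E (UNIV :: bool set) \<and> v \<in> {..<Suc n} \<rightarrow>\<^sub>E (UNIV :: (real ^ 'N) set)
      \<and> (\<Sum>i<n. (if \<psi> i then 1 else 0) *\<^sub>R (v i - v n)) = 0}"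

text \<open>Borel sigma-algebra of the product topology (discrete on {0,1}, Euclidean on E), restricted to X.\<close>
definition SX :: "nat \<Rightarrow> ('N::finite) state measure" where
  "SX n = restrict_space
      (PiM {..<n} (\<lambda>_. count_space (UNIV :: bool set)) \<Otimes>\<^sub>M PiM {..<Suc n} (\<lambda>_. (borel :: (real ^ 'N) measure)))
      (Xset n)"

definition crate :: "real \<Rightarrow> real \<Rightarrow> nat \<Rightarrow> ('N::finite) state \<Rightarrow> real" where
  "crate \<theta>a \<theta>d n x = \<theta>d * real (psiCard n (fst x)) + \<theta>a * (real n - real (psiCard n (fst x)))"

definition rrate :: "real \<Rightarrow> real \<Rightarrow> nat \<Rightarrow> nat \<Rightarrow> (nat \<Rightarrow> bool) \<Rightarrow> real" where
  "rrate \<theta>a \<theta>d n i \<psi> =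
     (\<theta>d * (if \<psi> i then 1 else 0) + \<theta>a * (if \<psi> i then 0 else 1))
     / (\<theta>d * real (psiCard n \<psi>) + \<theta>a * (real n - real (psiCard n \<psi>)))"

definition sflip :: "nat \<Rightarrow> (nat \<Rightarrow> bool) \<Rightarrow> (nat \<Rightarrow> bool)" where
  "sflip i \<psi> = \<psi>(i := \<not> \<psi> i)"

definition wvec :: "nat \<Rightarrow> nat \<Rightarrow> (nat \<Rightarrow> real ^ 'N) \<Rightarrow> real ^ 'N \<Rightarrow> real ^ 'N \<Rightarrow> (nat \<Rightarrow> real ^ 'N)" where
  "wvec n i v a b = (\<lambda>j. if j = i then a else if j = n then b else if j < Suc n then v j else undefined)"

text \<open>lambda_i^x(B) (for the deterministic cases the law is a Dirac mass,
  for psi(i)=0 it is the image of eta).\<close>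
definition lamK :: "nat \<Rightarrow> (real ^ 'N) measure \<Rightarrow> ('N::finite) state \<Rightarrow> nat \<Rightarrow> ('N::finite) state set \<Rightarrow> real" where
  "lamK n \<eta> x i B =
     (let \<psi> = fst x; v = snd x; k = psiCard n \<psi> in
      if \<psi> i then
        (if k = 1 then indicator B (sflip i \<psi>, wvec n i v (v i) (v n))
         else indicator B (sflip i \<psi>, wvec n i v (v i) (v n - inverse (real k - 1) *\<^sub>R (v i - v n))))
      else measure \<eta> ((\<lambda>y. (sflip i \<psi>, wvec n i v (y + v n) (inverse (real k + 1) *\<^sub>R y + v n))) -` B
                       \<inter> space \<eta>))"

definition muK :: "real \<Rightarrow> real \<Rightarrow> nat \<Rightarrow> (real ^ 'N) measure \<Rightarrow> ('N::finite) state \<Rightarrow> ('N::finite) state set \<Rightarrow> real" where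
  "muK \<theta>a \<theta>d n \<eta> x B = (\<Sum>i<n. rrate \<theta>a \<theta>d n i (fst x) * lamK n \<eta> x i B)"

text \<open>Y is a discrete-time Markov chain on (X, SX) with kernel mu and Y_0 ~ rho
  (characterised through its finite-dimensional distributions).\<close>
definition markov_chain ::
  "'w measure \<Rightarrow> ('N::finite) state measure \<Rightarrow> (('N::finite) state \<Rightarrow> ('N::finite) state set \<Rightarrow> real) \<Rightarrow> ('N::finite) state measure
     \<Rightarrow> (nat \<Rightarrow> 'w \<Rightarrow> ('N::finite) state) \<Rightarrow> bool" where
  "markov_chain M S K \<rho> Y \<longleftrightarrow>
     (\<forall>k. Y k \<in> measurable M S) \<and> distr M S (Y 0) = \<rho> \<and>
     (\<forall>k A. (\<forall>j. A j \<in> sets S) \<longrightarrow>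
        emeasure M {\<omega> \<in> space M. \<forall>j\<le>Suc k. Y j \<omega> \<in> A j}
        = (\<integral>\<^sup>+ \<omega>. indicator {\<omega> \<in> space M. \<forall>j\<le>k. Y j \<omega> \<in> A j} \<omega> * ennreal (K (Y k \<omega>) (A (Suc k))) \<partial>M))"

text \<open>Jump times: tau_k = sum_{i<k} gamma_i / c(Y_i) (gamma 0 plays the role of gamma_1).\<close>
definition jump_time :: "(nat \<Rightarrow> 'w \<Rightarrow> real) \<Rightarrow> (('N::finite) state \<Rightarrow> real) \<Rightarrow> (nat \<Rightarrow> 'w \<Rightarrow> ('N::finite) state) \<Rightarrow> nat \<Rightarrow> 'w \<Rightarrow> real" where
  "jump_time \<gamma> c Y k \<omega> = (\<Sum>i<k. \<gamma> i \<omega> / c (Y i \<omega>))"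

text \<open>X_t = Y_k for t in [tau_k, tau_(k+1)).\<close>
definition jump_process :: "(nat \<Rightarrow> 'w \<Rightarrow> real) \<Rightarrow> (('N::finite) state \<Rightarrow> real) \<Rightarrow> (nat \<Rightarrow> 'w \<Rightarrow> ('N::finite) state) \<Rightarrow> real \<Rightarrow> 'w \<Rightarrow> ('N::finite) state" where
  "jump_process \<gamma> c Y t \<omega> = Y (LEAST k. t < jump_time \<gamma> c Y (Suc k) \<omega>) \<omega>"

end

theory Submission
  imports Defs
begin

text \<open>Each jump changes the velocities by a bounded amount almost surely: an arriving particle
  shifts them by at most \<open>C = CARD('N) * R\<close>, the bound on the support of \<open>\<eta>\<close>, and a departing
  one moves the centre of mass \<open>v n\<close> to the mean of the remaining velocities. So after \<open>k\<close> jumps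
  all velocities are bounded by \<open>B\<^sub>0 + k * C\<close>, where \<open>B\<^sub>0 = \<Sum>j\<le>n. |v j|\<close> at time 0 is
  integrable under \<open>\<rho>\<close>. All jump rates are at most \<open>cmax = (\<theta>a + \<theta>d) * n\<close>, so the number
  \<open>N\<^sub>t\<close> of jumps before time \<open>t\<close> is at most the number of \<open>k\<close> with
  \<open>\<gamma>\<^sub>0 + \<dots> + \<gamma>\<^sub>k \<le> t * cmax\<close>; these Erlang partial sums satisfy the Chernoff bound
  \<open>P(\<gamma>\<^sub>0 + \<dots> + \<gamma>\<^sub>k \<le> s) \<le> exp s / 2 ^ (k + 1)\<close>, hence \<open>E N\<^sub>t < \<infinity>\<close> and
  \<open>|f\<^sub>i(X\<^sub>t)| \<le> B\<^sub>0 + C * N\<^sub>t\<close> is integrable.\<close>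

definition vel_bounded :: "nat \<Rightarrow> real \<Rightarrow> ('N::finite) state \<Rightarrow> bool" where
  "vel_bounded n b x \<longleftrightarrow> (\<forall>j\<le>n. norm (snd x j) \<le> b)"

lemma psiCard_le: "psiCard n \<psi> \<le> n"
  unfolding psiCard_def by (rule card_mono[of "{..<n}", simplified]) auto

lemma real_psiCard_eq_sum: "real (psiCard n \<psi>) = (\<Sum>i<n. of_bool (\<psi> i))"
  unfolding psiCard_def by (simp add: Int_def)

text \<open>Removing particle \<open>i\<close> replaces the centre of mass \<open>v n\<close> by the mean of the
  remaining velocities, which is bounded by their maximum.\<close>
lemma norm_removal_velocity_le:
  fixes v :: "nat \<Rightarrow> real ^ 'N::finite"
  assumes centre: "(\<Sum>j<n. (if \<psi> j then 1 else 0) *\<^sub>R (v j - v n)) = 0"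
    and i: "i < n" "\<psi> i" and not_last: "psiCard n \<psi> \<noteq> 1"
    and bound: "\<forall>j\<le>n. norm (v j) \<le> b"
  shows "norm (v n - inverse (real (psiCard n \<psi>) - 1) *\<^sub>R (v i - v n)) \<le> b"
proof -
  define A where "A = {j. j < n \<and> \<psi> j}"
  define k where "k = card A"
  have fin: "finite A" and iA: "i \<in> A" using i by (auto simp: A_def)
  have card_eq: "psiCard n \<psi> = k" unfolding k_def A_def psiCard_def ..
  have "k \<noteq> 0" "k \<noteq> 1" using fin iA not_last card_eq by (auto simp: k_def)
  then have k1: "real k - 1 > 0" by linarith
  have "(\<Sum>j<n. (if \<psi> j then 1 else 0) *\<^sub>R (v j - v n)) = (\<Sum>j\<in>A. v j - v n)"
    unfolding A_def by (rule sum.mono_neutral_cong_right) auto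
  then have "(\<Sum>j\<in>A. v j) = real k *\<^sub>R v n"
    using centre by (simp add: sum_subtractf k_def sum_constant_scaleR del: sum_constant)
  then have rest: "(\<Sum>j\<in>A - {i}. v j) = real k *\<^sub>R v n - v i"
    using sum_diff1[OF fin, of v] iA by simp
  have "v n - inverse (real k - 1) *\<^sub>R (v i - v n) = inverse (real k - 1) *\<^sub>R (\<Sum>j\<in>A - {i}. v j)"
  proof -
    have e: "inverse (real k - 1) * real k = 1 + inverse (real k - 1)"
      using k1 by (simp add: field_simps)
    have "inverse (real k - 1) *\<^sub>R (real k *\<^sub>R v n - v i)
        = (inverse (real k - 1) * real k) *\<^sub>R v n - inverse (real k - 1) *\<^sub>R v i"
      by (simp add: scaleR_diff_right)
    also have "\<dots> = v n - inverse (real k - 1) *\<^sub>R (v i - v n)"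
      unfolding e by (simp add: scaleR_add_left scaleR_diff_right)
    finally show ?thesis unfolding rest by simp
  qed
  also have "norm \<dots> \<le> inverse (real k - 1) * (\<Sum>j\<in>A - {i}. norm (v j))"
    using k1 by (simp add: norm_sum)
  also have "\<dots> \<le> inverse (real k - 1) * (\<Sum>j\<in>A - {i}. b)"
    using k1 bound by (intro mult_left_mono sum_mono) (auto simp: A_def)
  also have "\<dots> = b" using k1 fin iA by (simp add: k_def)
  finally show ?thesis unfolding card_eq .
qed

lemma measure_eq_0_if_AE_notin:
  assumes "AE y in M. y \<notin> A"
  shows "measure M (A \<inter> space M) = 0"
proof (cases "A \<inter> space M \<in> sets M")
  case True
  with assms show ?thesis
    by (subst (asm) AE_iff_measurable[where N = "A \<inter> space M"]) (auto simp: measure_def)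
qed (simp add: measure_notin_sets)

lemma lamK_eq_0_if_vel_unbounded:
  fixes \<eta> :: "(real ^ 'N::finite) measure" and x :: "'N state"
  assumes x: "x \<in> Xset n" and i: "i < n" and bx: "vel_bounded n b x" and C: "0 \<le> C"
    and \<eta>_bounded: "AE y in \<eta>. norm y \<le> C"
    and B: "\<forall>y\<in>B. \<not> vel_bounded n (b + C) y"
  shows "lamK n \<eta> x i B = 0"
proof -
  obtain \<psi> v where x_eq: "x = (\<psi>, v)" by (cases x)
  have centre: "(\<Sum>j<n. (if \<psi> j then 1 else 0) *\<^sub>R (v j - v n)) = 0"
    using x unfolding x_eq Xset_def by auto
  have vb: "\<forall>j\<le>n. norm (v j) \<le> b" using bx unfolding x_eq vel_bounded_def by simp
  have new_state_bounded: "(\<psi>', wvec n i v a d) \<notin> B"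
    if "norm a \<le> b + C" "norm d \<le> b + C" for \<psi>' a d
  proof -
    have "vel_bounded n (b + C) (\<psi>', wvec n i v a d)"
      using that vb C by (auto simp: vel_bounded_def wvec_def intro: order_trans)
    then show ?thesis using B by blast
  qed
  have "\<forall>j\<le>n. norm (v j) \<le> b + C" using vb C by force
  then have vi: "norm (v i) \<le> b + C" and vn: "norm (v n) \<le> b + C" using i by auto
  show ?thesis
  proof (cases "\<psi> i")
    case True
    show ?thesis
    proof (cases "psiCard n \<psi> = 1")
      case True
      then show ?thesis using \<open>\<psi> i\<close> new_state_bounded[OF vi vn] by (simp add: lamK_def x_eq)
    next
      case False
      then have "norm (v n - inverse (real (psiCard n \<psi>) - 1) *\<^sub>R (v i - v n)) \<le> b + C"
        using norm_removal_velocity_le[OF centre i \<open>\<psi> i\<close> False vb] C by linarith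
      then show ?thesis using \<open>\<psi> i\<close> False new_state_bounded[OF vi] by (simp add: lamK_def x_eq)
    qed
  next
    case False
    define k where "k = psiCard n \<psi>"
    define f where "f = (\<lambda>y. (sflip i \<psi>, wvec n i v (y + v n) (inverse (real k + 1) *\<^sub>R y + v n)))"
    have "f y \<notin> B" if y: "norm y \<le> C" for y
    proof -
      have "norm (inverse (real k + 1) *\<^sub>R y) \<le> norm y" by (simp add: field_simps)
      then have d: "norm (inverse (real k + 1) *\<^sub>R y + v n) \<le> b + C"
        using y vb norm_triangle_ineq[of "inverse (real k + 1) *\<^sub>R y" "v n"] by force
      have a: "norm (y + v n) \<le> b + C"
        using y vb norm_triangle_ineq[of y "v n"] by force
      show ?thesis unfolding f_def by (rule new_state_bounded[OF a d])
    qed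
    then have "AE y in \<eta>. y \<notin> f -` B" using \<eta>_bounded by (auto elim: eventually_mono)
    then have "measure \<eta> (f -` B \<inter> space \<eta>) = 0" by (rule measure_eq_0_if_AE_notin)
    then show ?thesis using False by (simp add: lamK_def x_eq f_def k_def)
  qed
qed

lemma muK_eq_0_if_vel_unbounded:
  fixes \<eta> :: "(real ^ 'N::finite) measure" and x :: "'N state"
  assumes "x \<in> Xset n" "vel_bounded n b x" "0 \<le> C" "AE y in \<eta>. norm y \<le> C"
    and "\<forall>y\<in>B. \<not> vel_bounded n (b + C) y"
  shows "muK \<theta>a \<theta>d n \<eta> x B = 0"
  using lamK_eq_0_if_vel_unbounded[OF assms(1) _ assms(2-)] by (simp add: muK_def)

lemma space_SX: "space (SX n) = Xset n"
  by (auto simp: SX_def space_restrict_space Xset_def space_pair_measure space_PiM)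

lemma measurable_velocity_SX: "i \<le> n \<Longrightarrow> (\<lambda>x. snd x i) \<in> borel_measurable (SX n)"
  unfolding SX_def
  by (intro measurable_restrict_space1 measurable_compose[OF measurable_snd] measurable_component_singleton) auto

lemma measurable_type_SX: "i < n \<Longrightarrow> (\<lambda>x. fst x i) \<in> measurable (SX n) (count_space UNIV)"
  unfolding SX_def
  by (intro measurable_restrict_space1 measurable_compose[OF measurable_fst] measurable_component_singleton) auto

lemma measurable_crate_SX: "crate \<theta>a \<theta>d n \<in> borel_measurable (SX n)"
proof -
  have [measurable]: "(\<lambda>x. fst x i) \<in> measurable (SX n) (count_space UNIV)" if "i \<in> {..<n}" for i
    using that by (simp add: measurable_type_SX)
  have "(\<lambda>x. real (psiCard n (fst x))) \<in> borel_measurable (SX n)"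
    unfolding real_psiCard_eq_sum by measurable
  then show ?thesis unfolding crate_def[abs_def] by measurable
qed

lemma measurable_vel_bounded_SX: "Measurable.pred (SX n) (vel_bounded n b)"
proof -
  have [measurable]: "(\<lambda>x. snd x j) \<in> borel_measurable (SX n)" if "j \<in> {..n}" for j
    using that by (simp add: measurable_velocity_SX)
  have "Measurable.pred (SX n) (\<lambda>x. \<forall>j\<in>{..n}. norm (snd x j) \<le> b)" by measurable
  then show ?thesis unfolding vel_bounded_def[abs_def] atMost_iff Ball_def .
qed

lemma measurable_vel_sum_SX: "(\<lambda>x. \<Sum>j\<le>n. norm (snd x j)) \<in> borel_measurable (SX n)"
proof -
  have [measurable]: "(\<lambda>x. snd x j) \<in> borel_measurable (SX n)" if "j \<in> {..n}" for j
    using that by (simp add: measurable_velocity_SX)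
  show ?thesis by measurable
qed

lemma crate_bounds:
  assumes "\<theta>a > 0" "\<theta>d > 0" "n > 0"
  shows "0 < crate \<theta>a \<theta>d n x" "crate \<theta>a \<theta>d n x \<le> (\<theta>a + \<theta>d) * real n"
proof -
  define k where "k = real (psiCard n (fst x))"
  have k: "0 \<le> k" "k \<le> real n" using psiCard_le by (auto simp: k_def)
  have c: "crate \<theta>a \<theta>d n x = \<theta>d * k + \<theta>a * (real n - k)" by (simp add: crate_def k_def)
  have "0 < min \<theta>a \<theta>d * k + min \<theta>a \<theta>d * (real n - k)" using assms by (simp add: algebra_simps)
  also have "\<dots> \<le> crate \<theta>a \<theta>d n x" unfolding c using k by (intro add_mono mult_right_mono) auto
  finally show "0 < crate \<theta>a \<theta>d n x" .
  have "crate \<theta>a \<theta>d n x \<le> (\<theta>a + \<theta>d) * k + (\<theta>a + \<theta>d) * (real n - k)"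
    unfolding c using k assms by (intro add_mono mult_right_mono) auto
  then show "crate \<theta>a \<theta>d n x \<le> (\<theta>a + \<theta>d) * real n" by (simp add: algebra_simps)
qed

lemma AE_vel_bounded_Suc:
  fixes Y :: "nat \<Rightarrow> 'w \<Rightarrow> ('N::finite) state" and \<eta> :: "(real ^ 'N) measure"
  assumes mc: "markov_chain M (SX n) (muK \<theta>a \<theta>d n \<eta>) \<rho> Y"
    and C: "0 \<le> C" and \<eta>_bounded: "AE y in \<eta>. norm y \<le> C"
  shows "AE \<omega> in M. vel_bounded n b (Y k \<omega>) \<longrightarrow> vel_bounded n (b + C) (Y (Suc k) \<omega>)"
proof -
  let ?S = "SX n :: 'N state measure"
  define A where "A j = (if j = k then {x \<in> space ?S. vel_bounded n b x}
    else if j = Suc k then {x \<in> space ?S. \<not> vel_bounded n (b + C) x} else space ?S)" for j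
  have Y_meas[measurable]: "Y j \<in> measurable M ?S" for j
    using mc by (simp add: markov_chain_def)
  have A_sets[measurable]: "A j \<in> sets ?S" for j
    using measurable_vel_bounded_SX[of n b] measurable_vel_bounded_SX[of n "b + C"]
    by (auto simp: A_def intro: predE pred_intros_logic)
  define bad where "bad = {\<omega> \<in> space M. \<forall>j\<le>Suc k. Y j \<omega> \<in> A j}"
  have "emeasure M bad = (\<integral>\<^sup>+\<omega>. indicator {\<omega> \<in> space M. \<forall>j\<le>k. Y j \<omega> \<in> A j} \<omega>
      * ennreal (muK \<theta>a \<theta>d n \<eta> (Y k \<omega>) (A (Suc k))) \<partial>M)"
    using mc A_sets by (simp add: markov_chain_def bad_def)
  also have "\<dots> = (\<integral>\<^sup>+\<omega>. 0 \<partial>M)"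
  proof (intro nn_integral_cong)
    fix \<omega> assume "\<omega> \<in> space M"
    show "indicator {\<omega> \<in> space M. \<forall>j\<le>k. Y j \<omega> \<in> A j} \<omega>
        * ennreal (muK \<theta>a \<theta>d n \<eta> (Y k \<omega>) (A (Suc k))) = 0"
    proof (cases "Y k \<omega> \<in> A k")
      case True
      then have "Y k \<omega> \<in> Xset n" "vel_bounded n b (Y k \<omega>)" by (auto simp: A_def space_SX)
      then have "muK \<theta>a \<theta>d n \<eta> (Y k \<omega>) (A (Suc k)) = 0"
        using muK_eq_0_if_vel_unbounded[OF _ _ C \<eta>_bounded] by (auto simp: A_def)
      then show ?thesis by simp
    qed (auto split: split_indicator)
  qed
  finally have "emeasure M bad = 0" by simp
  moreover have "bad \<in> sets M" unfolding bad_def by measurable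
  ultimately have "bad \<in> null_sets M" by (rule null_setsI)
  then show ?thesis
  proof (rule AE_I')
    show "{\<omega> \<in> space M. \<not> (vel_bounded n b (Y k \<omega>) \<longrightarrow> vel_bounded n (b + C) (Y (Suc k) \<omega>))} \<subseteq> bad"
      using measurable_space[OF Y_meas] by (auto simp: bad_def A_def)
  qed
qed

lemma vel_bounded_Suc_of_rational_bounds:
  assumes "\<forall>q\<in>\<rat>. vel_bounded n q x \<longrightarrow> vel_bounded n (q + C) y" and "vel_bounded n b x"
  shows "vel_bounded n (b + C) y"
  unfolding vel_bounded_def
proof (intro allI impI)
  fix j assume j: "j \<le> n"
  show "norm (snd y j) \<le> b + C"
  proof (rule ccontr)
    assume "\<not> ?thesis"
    then obtain q where q: "q \<in> \<rat>" "b < q" "q < norm (snd y j) - C"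
      using Rats_dense_in_real[of b "norm (snd y j) - C"] by auto
    have "vel_bounded n q x" using assms(2) q(2) by (auto simp: vel_bounded_def)
    then have "norm (snd y j) \<le> q + C" using assms(1) q(1) j by (auto simp: vel_bounded_def)
    then show False using q(3) by simp
  qed
qed

text \<open>The rational bounds make the exceptional null set independent of the (random) initial bound.\<close>
lemma AE_vel_bounded_linear_growth:
  fixes Y :: "nat \<Rightarrow> 'w \<Rightarrow> ('N::finite) state" and \<eta> :: "(real ^ 'N) measure"
  assumes mc: "markov_chain M (SX n) (muK \<theta>a \<theta>d n \<eta>) \<rho> Y"
    and C: "0 \<le> C" and \<eta>_bounded: "AE y in \<eta>. norm y \<le> C"
  shows "AE \<omega> in M. \<forall>k. vel_bounded n ((\<Sum>j\<le>n. norm (snd (Y 0 \<omega>) j)) + real k * C) (Y k \<omega>)"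
proof -
  have "AE \<omega> in M. \<forall>k. \<forall>q\<in>\<rat>. vel_bounded n q (Y k \<omega>) \<longrightarrow> vel_bounded n (q + C) (Y (Suc k) \<omega>)"
    using AE_vel_bounded_Suc[OF mc C \<eta>_bounded] by (simp add: AE_all_countable AE_ball_countable countable_rat)
  then show ?thesis
  proof (rule eventually_mono, intro allI)
    fix \<omega> k
    assume steps: "\<forall>k. \<forall>q\<in>\<rat>. vel_bounded n q (Y k \<omega>) \<longrightarrow> vel_bounded n (q + C) (Y (Suc k) \<omega>)"
    show "vel_bounded n ((\<Sum>j\<le>n. norm (snd (Y 0 \<omega>) j)) + real k * C) (Y k \<omega>)"
    proof (induction k)
      case 0
      show ?case by (auto simp: vel_bounded_def intro: member_le_sum)
    next
      case (Suc k)
      show ?case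
        using vel_bounded_Suc_of_rational_bounds[OF spec[OF steps, of k] Suc.IH] by (simp add: algebra_simps)
    qed
  qed
qed

lemma erlang_density_one_mult_exp:
  "erlang_density k 1 x * exp (- x) = erlang_density k 2 x * (1 / 2) ^ Suc k"
proof (cases "x < 0")
  case False
  have e: "exp (- x) * exp (- x) = exp (- 2 * x)" by (simp flip: exp_add)
  have p: "(2::real) ^ Suc k * (1 / 2) ^ Suc k = 1" by (simp flip: power_mult_distrib)
  have "erlang_density k 1 x * exp (- x) = x ^ k * (exp (- x) * exp (- x)) / fact k"
    using False by (simp add: erlang_density_def)
  also have "\<dots> = (2 ^ Suc k * (1 / 2) ^ Suc k) * x ^ k * exp (- 2 * x) / fact k"
    unfolding e p by simp
  also have "\<dots> = erlang_density k 2 x * (1 / 2) ^ Suc k"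
    using False by (simp add: erlang_density_def del: power_Suc)
  finally show ?thesis .
qed (simp add: erlang_density_def)
lemma nn_integral_exp_neg_erlang:
  assumes "distributed M lborel X (erlang_density k 1)"
  shows "(\<integral>\<^sup>+\<omega>. ennreal (exp (- X \<omega>)) \<partial>M) = ennreal ((1 / 2) ^ Suc k)"
proof -
  have "(\<integral>\<^sup>+\<omega>. ennreal (exp (- X \<omega>)) \<partial>M)
      = (\<integral>\<^sup>+x. ennreal (erlang_density k 1 x) * ennreal (exp (- x)) \<partial>lborel)"
    by (rule distributed_nn_integral[OF assms, symmetric]) measurable
  also have "\<dots> = (\<integral>\<^sup>+x. ennreal (erlang_density k 2 x * x ^ 0) * ennreal ((1 / 2) ^ Suc k) \<partial>lborel)"
  proof (intro nn_integral_cong)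
    fix x :: real
    have "ennreal (erlang_density k 1 x) * ennreal (exp (- x)) = ennreal (erlang_density k 1 x * exp (- x))"
      by (simp add: ennreal_mult)
    then show "ennreal (erlang_density k 1 x) * ennreal (exp (- x))
        = ennreal (erlang_density k 2 x * x ^ 0) * ennreal ((1 / 2) ^ Suc k)"
      unfolding erlang_density_one_mult_exp by (simp add: ennreal_mult del: power_Suc)
  qed
  also have "\<dots> = ennreal ((1 / 2) ^ Suc k)"
    using nn_integral_erlang_ith_moment[of 2 k 0] by (subst nn_integral_multc) auto
  finally show ?thesis .
qed

lemma (in prob_space) AE_exponential_nonneg:
  assumes "distributed M lborel X (exponential_density l)"
  shows "AE \<omega> in M. 0 \<le> X \<omega>"
  using distributed_AE2[OF assms, of "\<lambda>x. 0 \<le> x"] by (auto simp: exponential_density_def)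

lemma (in prob_space) emeasure_sum_exponential_le:
  assumes exp: "\<forall>i. distributed M lborel (\<gamma> i) (exponential_density 1)"
    and ind: "indep_vars (\<lambda>_. borel) \<gamma> UNIV"
  shows "emeasure M {\<omega> \<in> space M. (\<Sum>i\<le>k. \<gamma> i \<omega>) \<le> s} \<le> ennreal (exp s * (1 / 2) ^ Suc k)"
proof -
  define S where "S \<omega> = (\<Sum>i\<le>k. \<gamma> i \<omega>)" for \<omega>
  have erlang: "distributed M lborel S (erlang_density k 1)"
    using exponential_distributed_sum[of "{..k}" 1 \<gamma>] exp indep_vars_subset[OF ind]
    by (simp add: S_def[abs_def])
  have [measurable]: "S \<in> borel_measurable M"
    using distributed_measurable[OF erlang] by simp
  have "emeasure M {\<omega> \<in> space M. S \<omega> \<le> s} = (\<integral>\<^sup>+\<omega>. indicator {\<omega> \<in> space M. S \<omega> \<le> s} \<omega> \<partial>M)"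
    by simp
  also have "\<dots> \<le> (\<integral>\<^sup>+\<omega>. ennreal (exp s) * ennreal (exp (- S \<omega>)) \<partial>M)"
  proof (intro nn_integral_mono)
    fix \<omega>
    have "S \<omega> \<le> s \<Longrightarrow> ennreal 1 \<le> ennreal (exp s * exp (- S \<omega>))"
      by (intro ennreal_leI) (simp flip: exp_add)
    then show "indicator {\<omega> \<in> space M. S \<omega> \<le> s} \<omega> \<le> ennreal (exp s) * ennreal (exp (- S \<omega>))"
      by (auto split: split_indicator simp: ennreal_mult)
  qed
  also have "\<dots> = ennreal (exp s) * ennreal ((1 / 2) ^ Suc k)"
    by (simp add: nn_integral_cmult nn_integral_exp_neg_erlang[OF erlang] del: power_Suc)
  finally show ?thesis by (simp add: S_def ennreal_mult del: power_Suc)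
qed

lemma (in prob_space) nn_integral_count_partial_sums_finite:
  assumes "\<forall>i. distributed M lborel (\<gamma> i) (exponential_density 1)"
    and "indep_vars (\<lambda>_. borel) \<gamma> UNIV"
  shows "(\<integral>\<^sup>+\<omega>. (\<Sum>k. indicator {\<omega> \<in> space M. (\<Sum>i\<le>k. \<gamma> i \<omega>) \<le> s} \<omega>) \<partial>M) < \<infinity>"
proof -
  have [measurable]: "\<gamma> i \<in> borel_measurable M" for i
    using distributed_measurable[OF spec[OF assms(1)]] by simp
  have "(\<integral>\<^sup>+\<omega>. (\<Sum>k. indicator {\<omega> \<in> space M. (\<Sum>i\<le>k. \<gamma> i \<omega>) \<le> s} \<omega>) \<partial>M)
      = (\<Sum>k. emeasure M {\<omega> \<in> space M. (\<Sum>i\<le>k. \<gamma> i \<omega>) \<le> s})"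
    by (subst nn_integral_suminf) auto
  also have "\<dots> \<le> (\<Sum>k. ennreal (exp s * (1 / 2) ^ Suc k))"
    using emeasure_sum_exponential_le[OF assms] by (intro suminf_le) auto
  also have "\<dots> = ennreal (\<Sum>k. exp s * (1 / 2) ^ Suc k)"
  proof (rule suminf_ennreal2)
    show "summable (\<lambda>k. exp s * (1 / 2 :: real) ^ Suc k)"
      by (intro summable_mult summable_Suc_iff[THEN iffD2] summable_geometric) simp
  qed simp
  finally show ?thesis by (simp add: order.strict_trans1)
qed

definition jump_count ::
  "(nat \<Rightarrow> 'w \<Rightarrow> real) \<Rightarrow> (('N::finite) state \<Rightarrow> real) \<Rightarrow> (nat \<Rightarrow> 'w \<Rightarrow> 'N state) \<Rightarrow> real \<Rightarrow> 'w \<Rightarrow> nat" where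
  "jump_count \<gamma> c Y t \<omega> = (LEAST k. t < jump_time \<gamma> c Y (Suc k) \<omega>)"

lemma jump_process_eq: "jump_process \<gamma> c Y t \<omega> = Y (jump_count \<gamma> c Y t \<omega>) \<omega>"
  by (simp add: jump_process_def jump_count_def)

lemma measurable_jump_count:
  assumes [measurable]: "\<And>k. \<gamma> k \<in> borel_measurable M" "\<And>k. (\<lambda>\<omega>. c (Y k \<omega>)) \<in> borel_measurable M"
  shows "jump_count \<gamma> c Y t \<in> measurable M (count_space UNIV)"
  unfolding jump_count_def[abs_def] jump_time_def by measurable

text \<open>Holding times of rate at most \<open>cmax\<close> satisfy \<open>\<gamma> i / c (Y i) \<ge> \<gamma> i / cmax\<close>, so every jump
  before time \<open>t\<close> uses up clock mass \<open>\<gamma> 0 + \<dots> + \<gamma> k \<le> t * cmax\<close>.\<close>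
lemma jump_count_le_count_partial_sums:
  assumes c: "\<And>x. 0 < c x \<and> c x \<le> cmax" and \<gamma>: "\<And>i. 0 \<le> \<gamma> i \<omega>" and \<omega>: "\<omega> \<in> space M"
  shows "ennreal (real (jump_count \<gamma> c Y t \<omega>))
    \<le> (\<Sum>k. indicator {\<omega> \<in> space M. (\<Sum>i\<le>k. \<gamma> i \<omega>) \<le> t * cmax} \<omega>)"
proof -
  define N where "N = jump_count \<gamma> c Y t \<omega>"
  have cmax: "0 < cmax" using c[of undefined] by linarith
  have "(\<Sum>i\<le>k. \<gamma> i \<omega>) \<le> t * cmax" if "k < N" for k
  proof -
    have "(\<Sum>i\<le>k. \<gamma> i \<omega>) / cmax = (\<Sum>i\<le>k. \<gamma> i \<omega> / cmax)" by (rule sum_divide_distrib)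
    also have "\<dots> \<le> (\<Sum>i\<le>k. \<gamma> i \<omega> / c (Y i \<omega>))"
      using \<gamma> cmax by (intro sum_mono divide_left_mono) (auto simp: c)
    also have "\<dots> \<le> t"
      using not_less_Least[OF that[unfolded N_def jump_count_def]]
      by (simp add: jump_time_def lessThan_Suc_atMost)
    finally show ?thesis using cmax by (simp add: divide_le_eq)
  qed
  then have "(\<Sum>k<N. indicator {\<omega> \<in> space M. (\<Sum>i\<le>k. \<gamma> i \<omega>) \<le> t * cmax} \<omega>) = (\<Sum>k<N. 1 :: ennreal)"
    using \<omega> by (intro sum.cong) auto
  then have "ennreal (real N) = (\<Sum>k<N. indicator {\<omega> \<in> space M. (\<Sum>i\<le>k. \<gamma> i \<omega>) \<le> t * cmax} \<omega>)"
    by (simp add: ennreal_of_nat_eq_real_of_nat)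
  also have "\<dots> \<le> (\<Sum>k. indicator {\<omega> \<in> space M. (\<Sum>i\<le>k. \<gamma> i \<omega>) \<le> t * cmax} \<omega>)"
    by (rule sum_le_suminf) auto
  finally show ?thesis unfolding N_def .
qed

lemma (in prob_space) nn_integral_jump_count_finite:
  assumes "\<forall>i. distributed M lborel (\<gamma> i) (exponential_density 1)"
    and "indep_vars (\<lambda>_. borel) \<gamma> UNIV"
    and "\<And>x. 0 < c x \<and> c x \<le> cmax"
  shows "(\<integral>\<^sup>+\<omega>. ennreal (real (jump_count \<gamma> c Y t \<omega>)) \<partial>M) < \<infinity>"
proof -
  have "AE \<omega> in M. \<forall>i. 0 \<le> \<gamma> i \<omega>"
    unfolding AE_all_countable using assms(1) AE_exponential_nonneg by blast
  then have "AE \<omega> in M. ennreal (real (jump_count \<gamma> c Y t \<omega>))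
      \<le> (\<Sum>k. indicator {\<omega> \<in> space M. (\<Sum>i\<le>k. \<gamma> i \<omega>) \<le> t * cmax} \<omega>)"
    using AE_space by eventually_elim (rule jump_count_le_count_partial_sums[OF assms(3)], auto)
  then have "(\<integral>\<^sup>+\<omega>. ennreal (real (jump_count \<gamma> c Y t \<omega>)) \<partial>M)
      \<le> (\<integral>\<^sup>+\<omega>. (\<Sum>k. indicator {\<omega> \<in> space M. (\<Sum>i\<le>k. \<gamma> i \<omega>) \<le> t * cmax} \<omega>) \<partial>M)"
    by (rule nn_integral_mono_AE)
  also have "\<dots> < \<infinity>" using nn_integral_count_partial_sums_finite[OF assms(1,2)] .
  finally show ?thesis .
qed

lemma integrable_if_norm_le_affine_count:
  fixes f :: "'a \<Rightarrow> 'b::{banach, second_countable_topology}"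
  assumes "f \<in> borel_measurable M" and "integrable M B"
    and "N \<in> measurable M (count_space UNIV)" and "(\<integral>\<^sup>+\<omega>. ennreal (real (N \<omega>)) \<partial>M) < \<infinity>"
    and "AE \<omega> in M. norm (f \<omega>) \<le> B \<omega> + C * real (N \<omega>)"
  shows "integrable M f"
proof (rule Bochner_Integration.integrable_bound)
  have "integrable M (\<lambda>\<omega>. real (N \<omega>))"
    using assms(3,4) by (intro integrableI_nonneg) auto
  then show "integrable M (\<lambda>\<omega>. B \<omega> + C * real (N \<omega>))"
    using assms(2) by auto
  show "AE \<omega> in M. norm (f \<omega>) \<le> norm (B \<omega> + C * real (N \<omega>))"
    using assms(5) by eventually_elim auto
qed fact

lemma norm_le_card_mult_if_components_le:
  fixes x :: "real ^ 'N::finite"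
  assumes "\<forall>j. \<bar>x $ j\<bar> \<le> R"
  shows "norm x \<le> real CARD('N) * R"
proof -
  have "norm x \<le> (\<Sum>j\<in>UNIV. \<bar>x $ j\<bar>)" by (rule norm_le_l1_cart)
  also have "\<dots> \<le> (\<Sum>j\<in>(UNIV :: 'N set). R)" using assms by (intro sum_mono) auto
  finally show ?thesis by simp
qed

lemma integrable_initial_vel_sum:
  fixes Y :: "nat \<Rightarrow> 'w \<Rightarrow> ('N::finite) state"
  assumes mc: "markov_chain M (SX n) K \<rho> Y" and \<rho>: "\<forall>i\<le>n. integrable \<rho> (\<lambda>x. snd x i)"
  shows "integrable M (\<lambda>\<omega>. \<Sum>j\<le>n. norm (snd (Y 0 \<omega>) j))"
proof -
  have "integrable \<rho> (\<lambda>x. \<Sum>j\<le>n. norm (snd x j))"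
    using \<rho> by (intro Bochner_Integration.integrable_sum integrable_norm) auto
  moreover have "Y 0 \<in> measurable M (SX n)" and "distr M (SX n) (Y 0) = \<rho>"
    using mc by (auto simp: markov_chain_def)
  ultimately show ?thesis
    using integrable_distr_eq[OF _ measurable_vel_sum_SX] by metis
qed

theorem proposition6:
  fixes \<theta>a \<theta>d R :: real and n :: nat
    and \<eta> :: "(real ^ 'N) measure" and \<rho> :: "('N::finite) state measure"
    and M :: "'w measure" and Y :: "nat \<Rightarrow> 'w \<Rightarrow> ('N::finite) state" and \<gamma> :: "nat \<Rightarrow> 'w \<Rightarrow> real"
  assumes "\<theta>a > 0" and "\<theta>d > 0" and "n > 0"
    and "prob_space \<eta>" and "sets \<eta> = sets borel" and "integrable \<eta> (\<lambda>x. x)"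
    and "R > 0" and "AE x in \<eta>. \<forall>j. \<bar>x $ j\<bar> \<le> R"
    and "prob_space \<rho>" and "sets \<rho> = sets (SX n)"
    and "\<forall>i\<le>n. integrable \<rho> (\<lambda>x. snd x i)"
    and "prob_space M"
    and "markov_chain M (SX n) (muK \<theta>a \<theta>d n \<eta>) \<rho> Y"
    and "\<forall>k. \<gamma> k \<in> borel_measurable M \<and> distributed M lborel (\<gamma> k) (\<lambda>x. ennreal (exponential_density 1 x))"
    and "prob_space.indep_vars M (\<lambda>_. borel) \<gamma> UNIV"
    and "prob_space.indep_set M
           {(\<lambda>\<omega> k. Y k \<omega>) -` A \<inter> space M | A. A \<in> sets (PiM UNIV (\<lambda>_. SX n))}
           {(\<lambda>\<omega> k. \<gamma> k \<omega>) -` A \<inter> space M | A. A \<in> sets (PiM UNIV (\<lambda>_. (borel :: real measure)))}"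
  shows "\<forall>i\<le>n. \<forall>t\<ge>0. integrable M (\<lambda>\<omega>. snd (jump_process \<gamma> (crate \<theta>a \<theta>d n) Y t \<omega>) i)"
proof (intro allI impI)
  fix i t assume i: "i \<le> n"
  interpret prob_space M by fact
  define C where "C = real CARD('N) * R"
  define c where "c = (crate \<theta>a \<theta>d n :: 'N state \<Rightarrow> real)"
  have C: "0 \<le> C" using \<open>R > 0\<close> by (simp add: C_def)
  have \<eta>_bounded: "AE y in \<eta>. norm y \<le> C"
    using assms(8) by eventually_elim (simp add: C_def norm_le_card_mult_if_components_le)
  have Y_meas: "Y k \<in> measurable M (SX n)" for k
    using assms(13) by (simp add: markov_chain_def)
  have N_meas: "jump_count \<gamma> c Y t \<in> measurable M (count_space UNIV)"
    using assms(14) measurable_compose[OF Y_meas measurable_crate_SX]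
    by (intro measurable_jump_count) (auto simp: c_def)
  have N_finite: "(\<integral>\<^sup>+\<omega>. ennreal (real (jump_count \<gamma> c Y t \<omega>)) \<partial>M) < \<infinity>"
    using assms(14,15) crate_bounds[OF assms(1-3)]
    by (intro nn_integral_jump_count_finite[where cmax = "(\<theta>a + \<theta>d) * real n"]) (auto simp: c_def)
  have "(\<lambda>\<omega>. snd (Y (jump_count \<gamma> c Y t \<omega>) \<omega>) i) \<in> borel_measurable M"
    by (rule measurable_compose_countable[OF measurable_compose[OF Y_meas measurable_velocity_SX[OF i]] N_meas])
  moreover have "AE \<omega> in M. norm (snd (Y (jump_count \<gamma> c Y t \<omega>) \<omega>) i)
      \<le> (\<Sum>j\<le>n. norm (snd (Y 0 \<omega>) j)) + C * real (jump_count \<gamma> c Y t \<omega>)"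
    using AE_vel_bounded_linear_growth[OF assms(13) C \<eta>_bounded]
    by eventually_elim (use i in \<open>auto simp: vel_bounded_def mult.commute\<close>)
  ultimately show "integrable M (\<lambda>\<omega>. snd (jump_process \<gamma> (crate \<theta>a \<theta>d n) Y t \<omega>) i)"
    unfolding jump_process_eq c_def[symmetric]
    by (rule integrable_if_norm_le_affine_count[OF _ integrable_initial_vel_sum[OF assms(13,11)] N_meas N_finite])
qed

end
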